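(* Let $A=\{A_n\}_{n\ge0}$ be a finitely supported complex sequence with $A_0=0$, not identically zero, and put $a_n=(A_n-A_{n-1})/n$ for $n\ge1$ (so $A_n=\sum_{k=1}^n k a_k$). Then $$\sum_{n=1}^\infty\frac{|A_n|^2}{n(n+1)^2}<\sum_{n=1}^\infty\frac{|A_n|^2}{n^2(n+1)}\le\sum_{n=1}^\infty n|a_n|^2 .$$ *)

theory Defs
  imports "HOL-Analysis.Analysis"
begin

end

theory Submission
  imports Defs
begin

text \<open>With b k = A (k+1) - A k = (k+1) a (k+1) we have A n = b 0 + ... + b (n-1), so
  Cauchy--Schwarz gives |A n|^2 <= n (|b 0|^2 + ... + |b (n-1)|^2). Dividing by n^2 (n+1) and
  summing over n, the total weight of |b k|^2 is at most the telescoping sum over n > k of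
  1/(n (n+1)), i.e. 1/(k+1), and |b k|^2/(k+1) = (k+1) |a (k+1)|^2. The strict inequality is
  n (n+1)^2 > n^2 (n+1) at an index where A n is nonzero.\<close>

lemma sum_prefix_sums_div_consecutive:
  fixes c :: "nat \<Rightarrow> 'a :: field_char_0"
  shows "(\<Sum>n<N. (\<Sum>k\<le>n. c k) / (of_nat (Suc n) * of_nat (Suc (Suc n))))
           = (\<Sum>k<N. c k / of_nat (Suc k)) - (\<Sum>k<N. c k) / of_nat (Suc N)"
proof (induction N)
  case 0
  then show ?case by simp
next
  case (Suc N)
  have "(\<Sum>k<Suc N. c k) / (of_nat (Suc N) * of_nat (Suc (Suc N)))
          = (\<Sum>k<N. c k) / of_nat (Suc N) + c N / of_nat (Suc N)
            - (\<Sum>k<Suc N. c k) / of_nat (Suc (Suc N))"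
  proof -
    have "of_nat (Suc N) \<noteq> (0 :: 'a)" "of_nat (Suc N) + 1 \<noteq> (0 :: 'a)"
      using of_nat_neq_0 [of N] of_nat_neq_0 [of "Suc N"] by (metis of_nat_Suc add.commute)+
    then show ?thesis
      by (simp del: of_nat_Suc add: of_nat_Suc [of "Suc N"] field_simps)
  qed
  with Suc.IH show ?case
    by (simp add: lessThan_Suc_atMost [symmetric])
qed

lemma discrete_hardy_inequality:
  fixes b :: "nat \<Rightarrow> 'a :: real_normed_vector"
  shows "(\<Sum>n<N. (norm (\<Sum>k\<le>n. b k))\<^sup>2 / ((real (Suc n))\<^sup>2 * (real (Suc n) + 1)))
           \<le> (\<Sum>k<N. (norm (b k))\<^sup>2 / real (Suc k))"
proof -
  define c where "c k = (norm (b k))\<^sup>2" for k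
  have term_le: "(norm (\<Sum>k\<le>n. b k))\<^sup>2 / ((real (Suc n))\<^sup>2 * (real (Suc n) + 1))
      \<le> (\<Sum>k\<le>n. c k) / (real (Suc n) * real (Suc (Suc n)))" for n
  proof -
    have "(norm (\<Sum>k\<le>n. b k))\<^sup>2 \<le> (\<Sum>k\<le>n. norm (b k))\<^sup>2"
      by (intro power_mono norm_sum) simp
    also have "\<dots> \<le> real (Suc n) * (\<Sum>k\<le>n. c k)"
      using sum_squared_le_sum_of_squares [of "\<lambda>k. norm (b k)" "{..n}"]
      by (simp add: c_def mult.commute)
    finally have "(norm (\<Sum>k\<le>n. b k))\<^sup>2 / ((real (Suc n))\<^sup>2 * (real (Suc n) + 1))
        \<le> real (Suc n) * (\<Sum>k\<le>n. c k) / ((real (Suc n))\<^sup>2 * (real (Suc n) + 1))"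
      by (rule divide_right_mono) simp
    also have "\<dots> = (\<Sum>k\<le>n. c k) / (real (Suc n) * real (Suc (Suc n)))"
      by (simp add: power2_eq_square)
    finally show ?thesis .
  qed
  have "(\<Sum>n<N. (norm (\<Sum>k\<le>n. b k))\<^sup>2 / ((real (Suc n))\<^sup>2 * (real (Suc n) + 1)))
      \<le> (\<Sum>n<N. (\<Sum>k\<le>n. c k) / (real (Suc n) * real (Suc (Suc n))))"
    by (rule sum_mono) (rule term_le)
  also have "\<dots> = (\<Sum>k<N. c k / real (Suc k)) - (\<Sum>k<N. c k) / real (Suc N)"
    by (rule sum_prefix_sums_div_consecutive)
  also have "\<dots> \<le> (\<Sum>k<N. c k / real (Suc k))"
    by (simp add: c_def sum_nonneg)
  finally show ?thesis by (simp add: c_def)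
qed

lemma sum_div_weights_strict_mono:
  fixes f :: "nat \<Rightarrow> real"
  assumes nonneg: "\<And>n. 0 \<le> f n" and pos: "0 < f m" and "m < N"
  shows "(\<Sum>n<N. f n / (real (Suc n) * (real (Suc n) + 1)\<^sup>2))
           < (\<Sum>n<N. f n / ((real (Suc n))\<^sup>2 * (real (Suc n) + 1)))"
proof (rule sum_strict_mono_ex1)
  have weights_lt: "x\<^sup>2 * (x + 1) < x * (x + 1)\<^sup>2" if "0 < x" for x :: real
    using that by (simp add: power2_eq_square algebra_simps add_pos_pos)
  have den_lt: "(real (Suc n))\<^sup>2 * (real (Suc n) + 1) < real (Suc n) * (real (Suc n) + 1)\<^sup>2" for n
    using weights_lt [of "real (Suc n)"] by simp
  then show "\<forall>n\<in>{..<N}. f n / (real (Suc n) * (real (Suc n) + 1)\<^sup>2)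
               \<le> f n / ((real (Suc n))\<^sup>2 * (real (Suc n) + 1))"
    using nonneg by (fastforce intro: divide_left_mono less_imp_le)
  show "\<exists>n\<in>{..<N}. f n / (real (Suc n) * (real (Suc n) + 1)\<^sup>2)
               < f n / ((real (Suc n))\<^sup>2 * (real (Suc n) + 1))"
    using \<open>m < N\<close> pos den_lt by (intro bexI [of _ m] divide_strict_left_mono) auto
qed simp

theorem corollary2p2:
  fixes A :: "nat \<Rightarrow> complex" and a :: "nat \<Rightarrow> complex"
  assumes fin_supp: "finite {n. A n \<noteq> 0}"
    and A0: "A 0 = 0"
    and nonzero: "\<exists>n. A n \<noteq> 0"
    and a_def: "\<And>n. n \<ge> 1 \<Longrightarrow> a n = (A n - A (n - 1)) / of_nat n"
  shows "(\<Sum>n. (cmod (A (Suc n)))\<^sup>2 / (real (Suc n) * (real (Suc n) + 1)\<^sup>2))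
           < (\<Sum>n. (cmod (A (Suc n)))\<^sup>2 / ((real (Suc n))\<^sup>2 * (real (Suc n) + 1)))
       \<and> (\<Sum>n. (cmod (A (Suc n)))\<^sup>2 / ((real (Suc n))\<^sup>2 * (real (Suc n) + 1)))
           \<le> (\<Sum>n. real (Suc n) * (cmod (a (Suc n)))\<^sup>2)"
proof -
  obtain N where A_zero: "\<And>n. N \<le> n \<Longrightarrow> A n = 0"
    using finite_nat_bounded [OF fin_supp] by (meson lessThan_iff not_le subsetD mem_Collect_eq)
  have A_tail: "A (Suc n) = 0" "a (Suc n) = 0" if "N \<le> n" for n
    using A_zero [of n] A_zero [of "Suc n"] a_def [of "Suc n"] that by simp_all
  define b where "b k = A (Suc k) - A k" for k
  have A_Suc: "A (Suc n) = (\<Sum>k\<le>n. b k)" for n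
    using sum_lessThan_telescope [of A "Suc n"] A0 by (simp add: b_def lessThan_Suc_atMost)
  have a_term: "(cmod (b n))\<^sup>2 / real (Suc n) = real (Suc n) * (cmod (a (Suc n)))\<^sup>2" for n
    using a_def [of "Suc n"] by (simp add: b_def norm_divide power_divide power2_eq_square del: of_nat_Suc)
  have hardy: "(\<Sum>n<N. (cmod (A (Suc n)))\<^sup>2 / ((real (Suc n))\<^sup>2 * (real (Suc n) + 1)))
      \<le> (\<Sum>n<N. real (Suc n) * (cmod (a (Suc n)))\<^sup>2)"
    using discrete_hardy_inequality [where N = N and b = b] by (simp only: A_Suc a_term)
  obtain m where "A (Suc m) \<noteq> 0"
    using nonzero A0 by (metis not0_implies_Suc)
  moreover from this have "m < N"
    using A_zero [of "Suc m"] by (cases "N \<le> Suc m") auto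
  ultimately have strict: "(\<Sum>n<N. (cmod (A (Suc n)))\<^sup>2 / (real (Suc n) * (real (Suc n) + 1)\<^sup>2))
      < (\<Sum>n<N. (cmod (A (Suc n)))\<^sup>2 / ((real (Suc n))\<^sup>2 * (real (Suc n) + 1)))"
    by (intro sum_div_weights_strict_mono) auto
  have series_eq: "(\<Sum>n. f n) = (\<Sum>n<N. f n)" if "\<And>n. N \<le> n \<Longrightarrow> f n = 0" for f :: "nat \<Rightarrow> real"
    using that by (intro suminf_finite) auto
  show ?thesis
    using strict hardy by (simp add: series_eq A_tail)
qed

end
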